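(* Let $S:\mathcal{V}\times\mathcal{Y}\to\mathbb{R}$ be a surrogate loss such that $S(\cdot,y)$ is continuous for every $y\in\mathcal{Y}$, and suppose there is a continuous injective map $t:\mathcal{M}\to\mathcal{V}$ such that for every $q\in\operatorname{Prob}(\mathcal{Y})$, $t(\mu(q))$ is the unique minimizer of $v\mapsto s(v,q)$ over $\mathcal{V}$. Then there exists a strictly convex function $h:\mathcal{M}\to\mathbb{R}$, differentiable on $\mathcal{M}$ (with gradients taken within the affine hull of $\mathcal{M}$), such that $$\delta s(v,q)=D_h\big(\mu(q),t^{-1}(v)\big)\qquad\text{for all } v\in t(\mathcal{M}),\ q\in\operatorname{Prob}(\mathcal{Y}).$$
   Context: Let $\mathcal{Y}$ be a finite nonempty set, $\mathcal{H}$ a finite-dimensional real Euclidean space with inner product $\langle\cdot,\cdot\rangle$, and $\phi:\mathcal{Y}\to\mathcal{H}$ a map. $\operatorname{Prob}(\mathcal{Y})$ denotes the set of probability distributions on $\mathcal{Y}$; for $q\in\operatorname{Prob}(\mathcal{Y})$ let $\mu(q)=\sum_{y}q(y)\phi(y)$. The marginal polytope is $\mathcal{M}=\operatorname{hull}(\phi(\mathcal{Y}))=\{\mu(q):q\in\operatorname{Prob}(\mathcal{Y})\}$. A surrogate loss is a function $S:\mathcal{V}\times\mathcal{Y}\to\mathbb{R}$ where $\mathcal{V}$ is a finite-dimensional real vector space; $s(v,q)=\mathbb{E}_{Y\sim q}S(v,Y)$ and $\delta s(v,q)=s(v,q)-\inf_{v'\in\mathcal{V}}s(v',q)$. For a convex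 differentiable $h$ on a convex set, the Bregman divergence is $D_h(u',u)=h(u')-h(u)-\langle u'-u,\nabla h(u)\rangle$. *)

theory Defs
  imports "HOL-Analysis.Analysis"
begin

definition prob_dist :: "('y::finite \<Rightarrow> real) \<Rightarrow> bool" where
  "prob_dist q \<longleftrightarrow> (\<forall>y. 0 \<le> q y) \<and> (\<Sum>y\<in>UNIV. q y) = 1"

definition mean_emb :: "('y::finite \<Rightarrow> 'h::real_vector) \<Rightarrow> ('y \<Rightarrow> real) \<Rightarrow> 'h" where
  "mean_emb \<phi> q = (\<Sum>y\<in>UNIV. q y *\<^sub>R \<phi> y)"

definition marginal_polytope :: "('y \<Rightarrow> 'h::real_vector) \<Rightarrow> 'h set" where
  "marginal_polytope \<phi> = convex hull (range \<phi>)"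

definition exp_loss :: "('v \<Rightarrow> 'y::finite \<Rightarrow> real) \<Rightarrow> 'v \<Rightarrow> ('y \<Rightarrow> real) \<Rightarrow> real" where
  "exp_loss S v q = (\<Sum>y\<in>UNIV. q y * S v y)"

definition regret :: "('v \<Rightarrow> 'y::finite \<Rightarrow> real) \<Rightarrow> 'v \<Rightarrow> ('y \<Rightarrow> real) \<Rightarrow> real" where
  "regret S v q = exp_loss S v q - (INF v'. exp_loss S v' q)"

definition strict_convex_on :: "'a::real_vector set \<Rightarrow> ('a \<Rightarrow> real) \<Rightarrow> bool" where
  "strict_convex_on A f \<longleftrightarrow> convex A \<and>
     (\<forall>x\<in>A. \<forall>y\<in>A. x \<noteq> y \<longrightarrow> (\<forall>u::real. 0 < u \<and> u < 1 \<longrightarrow>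
        f (u *\<^sub>R x + (1 - u) *\<^sub>R y) < u * f x + (1 - u) * f y))"

definition bregman :: "('a::real_inner \<Rightarrow> real) \<Rightarrow> ('a \<Rightarrow> 'a) \<Rightarrow> 'a \<Rightarrow> 'a \<Rightarrow> real" where
  "bregman h g u' u = h u' - h u - inner (u' - u) (g u)"

end

theory Submission
  imports Defs
begin

(*
  For fixed v, s(v, q) is linear in q.  If r has total mass zero and mean zero, then
  q + r and q - r are distributions with the same mean as q (for r small), so t(mu q)
  minimises both; comparing the minimisers of two distributions gives
  2 |s(t(mu p), r) - s(t(mu p'), r)| <= s(t(mu p), p' - p) - s(t(mu p'), p' - p),
  and cutting the segment from q0 to q1 into n pieces makes the variation of
  s(t(mu q), r) at most C/n.  Hence s(t u, r) does not depend on u in M (first for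
  distributions dominating r, then for positive ones by scaling, then everywhere by
  continuity).  Duality then makes S(t u, .) - S(t w, .) an affine function of phi,
  with a linear part B u that can be chosen in the direction space of M and continuous
  in u, i.e. s(t u, q) = s(t w, q) + c u + <B u, mu q>.  With h m = -(c m + <B m, m>)
  and gradient -B the regret is exactly D_h(mu q, u).  It is nonnegative, and positive
  off the diagonal by uniqueness of the minimiser and injectivity of t; the former
  gives differentiability (with the continuity of B), the latter strict convexity.
*)

definition balanced :: "('y::finite \<Rightarrow> 'h::real_vector) \<Rightarrow> ('y \<Rightarrow> real) \<Rightarrow> bool" where
  "balanced \<phi> r \<longleftrightarrow> sum r UNIV = 0 \<and> mean_emb \<phi> r = 0"

lemma exp_loss_add: "exp_loss S v (\<lambda>y. p y + r y) = exp_loss S v p + exp_loss S v r"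
  unfolding exp_loss_def by (simp add: algebra_simps sum.distrib)

lemma exp_loss_diff: "exp_loss S v (\<lambda>y. p y - r y) = exp_loss S v p - exp_loss S v r"
  unfolding exp_loss_def by (simp add: algebra_simps sum_subtractf)

lemma exp_loss_scale: "exp_loss S v (\<lambda>y. c * r y) = c * exp_loss S v r"
  unfolding exp_loss_def by (simp add: sum_distrib_left algebra_simps)

lemma mean_emb_add: "mean_emb \<phi> (\<lambda>y. p y + r y) = mean_emb \<phi> p + mean_emb \<phi> r"
  unfolding mean_emb_def by (simp add: scaleR_add_left sum.distrib)

lemma mean_emb_scale: "mean_emb \<phi> (\<lambda>y. c * r y) = c *\<^sub>R mean_emb \<phi> r"
  unfolding mean_emb_def by (simp add: scaleR_sum_right)

lemma prob_dist_convex_combination: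
  assumes "prob_dist p" "prob_dist q" "0 \<le> a" "a \<le> 1"
  shows "prob_dist (\<lambda>y. (1 - a) * p y + a * q y)"
  using assms by (simp add: prob_dist_def sum.distrib sum_distrib_left[symmetric])

lemma mean_emb_convex_combination:
  "mean_emb \<phi> (\<lambda>y. (1 - a) * p y + a * q y) = (1 - a) *\<^sub>R mean_emb \<phi> p + a *\<^sub>R mean_emb \<phi> q"
  by (simp add: mean_emb_add mean_emb_scale)

lemma convex_marginal_polytope: "convex (marginal_polytope \<phi>)"
  by (simp add: marginal_polytope_def)

lemma marginal_polytope_eq_mean_emb_image:
  fixes \<phi> :: "'y::finite \<Rightarrow> 'h::real_vector"
  shows "marginal_polytope \<phi> = mean_emb \<phi> ` Collect prob_dist"
proof
  show "mean_emb \<phi> ` Collect prob_dist \<subseteq> marginal_polytope \<phi>"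
    unfolding marginal_polytope_def mean_emb_def prob_dist_def
    by (auto intro!: convex_sum simp: hull_inc)
  have "mean_emb \<phi> (\<lambda>z. if z = y then 1 else 0) = (\<Sum>z\<in>UNIV. if z = y then \<phi> z else 0)" for y
    unfolding mean_emb_def by (rule sum.cong) auto
  then have "\<phi> y = mean_emb \<phi> (\<lambda>z. if z = y then 1 else 0)" for y
    by simp
  moreover have "prob_dist (\<lambda>z. if z = y then 1 else 0)" for y :: 'y
    by (simp add: prob_dist_def)
  ultimately have "range \<phi> \<subseteq> mean_emb \<phi> ` Collect prob_dist"
    by blast
  moreover have "convex (mean_emb \<phi> ` Collect prob_dist)"
  proof (rule convexI)
    fix a b and u v :: real
    assume "a \<in> mean_emb \<phi> ` Collect prob_dist" "b \<in> mean_emb \<phi> ` Collect prob_dist"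
      and "0 \<le> u" "0 \<le> v" "u + v = 1"
    then obtain p q where "prob_dist p" "prob_dist q" "a = mean_emb \<phi> p" "b = mean_emb \<phi> q"
      by blast
    moreover have "prob_dist (\<lambda>y. (1 - v) * p y + v * q y)"
      using calculation \<open>0 \<le> u\<close> \<open>0 \<le> v\<close> \<open>u + v = 1\<close>
      by (intro prob_dist_convex_combination) auto
    moreover have "u = 1 - v"
      using \<open>u + v = 1\<close> by simp
    ultimately show "u *\<^sub>R a + v *\<^sub>R b \<in> mean_emb \<phi> ` Collect prob_dist"
      by (auto intro!: image_eqI[where f="mean_emb \<phi>", OF mean_emb_convex_combination[symmetric]])
  qed
  ultimately show "marginal_polytope \<phi> \<subseteq> mean_emb \<phi> ` Collect prob_dist"
    unfolding marginal_polytope_def by (rule hull_minimal)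
qed

lemma telescoping_abs_le:
  fixes x z :: "nat \<Rightarrow> real"
  assumes "\<And>i. i < n \<Longrightarrow> \<bar>x i - x (Suc i)\<bar> \<le> z i - z (Suc i)"
  shows "\<bar>x 0 - x n\<bar> \<le> z 0 - z n"
  using assms
proof (induction n)
  case (Suc n)
  then show ?case
    using abs_triangle_ineq[of "x 0 - x n" "x n - x (Suc n)"] by fastforce
qed simp

lemma eq_0_if_abs_le_const_over_n:
  fixes x c :: real
  assumes "\<And>n. 0 < n \<Longrightarrow> \<bar>x\<bar> \<le> c / real n"
  shows "x = 0"
proof -
  have "\<bar>x\<bar> \<le> 0"
    by (rule LIMSEQ_le_const[OF lim_const_over_n[of c]]) (use assms in \<open>auto intro: exI[of _ 1]\<close>)
  then show ?thesis by simp
qed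

lemma sum_shift_weight_to_base:
  fixes a :: "'y::finite \<Rightarrow> 'a::real_vector"
  shows "(\<Sum>y\<in>UNIV. (z y - (if y = y0 then sum z UNIV else 0)) *\<^sub>R a y)
    = (\<Sum>y\<in>UNIV. z y *\<^sub>R (a y - a y0))"
proof -
  have "(\<Sum>y\<in>UNIV. (if y = y0 then sum z UNIV else 0) *\<^sub>R a y) = (\<Sum>y\<in>UNIV. z y *\<^sub>R a y0)"
    by (simp add: if_distrib[of "\<lambda>c. c *\<^sub>R a _"] scaleR_sum_left cong: if_cong)
  then show ?thesis
    by (simp add: scaleR_diff_left scaleR_diff_right sum_subtractf)
qed

lemma bregman_sum_swap:
  "bregman h g x y + bregman h g y x = inner (x - y) (g x - g y)"
  unfolding bregman_def by (simp add: inner_diff_left inner_diff_right inner_commute algebra_simps)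

lemma strict_convex_on_if_bregman_pos:
  assumes "convex A"
    and pos: "\<And>x y. x \<in> A \<Longrightarrow> y \<in> A \<Longrightarrow> x \<noteq> y \<Longrightarrow> 0 < bregman h g x y"
  shows "strict_convex_on A h"
  unfolding strict_convex_on_def
proof (intro conjI \<open>convex A\<close> ballI impI allI)
  fix x y :: 'a and a :: real
  assume x: "x \<in> A" and y: "y \<in> A" and "x \<noteq> y" and a: "0 < a \<and> a < 1"
  define z where "z = a *\<^sub>R x + (1 - a) *\<^sub>R y"
  have z: "z \<in> A"
    unfolding z_def using convexD[OF \<open>convex A\<close> x y] a by auto
  have "z \<noteq> x" "z \<noteq> y"
    using \<open>x \<noteq> y\<close> a by (auto simp: z_def algebra_simps)
  \<comment> \<open>The linear terms of the two Bregman divergences at z cancel.\<close>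
  have "a * inner (x - z) (g z) + (1 - a) * inner (y - z) (g z) = 0"
    unfolding z_def by (simp add: inner_add_left algebra_simps)
  moreover have "0 < a * bregman h g x z" "0 < (1 - a) * bregman h g y z"
    using pos[OF x z] pos[OF y z] \<open>z \<noteq> x\<close> \<open>z \<noteq> y\<close> a by auto
  ultimately have "h z < a * h x + (1 - a) * h y"
    unfolding bregman_def by (simp add: algebra_simps)
  then show "h (a *\<^sub>R x + (1 - a) *\<^sub>R y) < a * h x + (1 - a) * h y"
    by (simp add: z_def)
qed

lemma has_derivative_if_bregman_nonneg:
  assumes g: "continuous_on A g" and u: "u \<in> A"
    and nonneg: "\<And>x y. x \<in> A \<Longrightarrow> y \<in> A \<Longrightarrow> 0 \<le> bregman h g x y"
  shows "(h has_derivative (\<lambda>d. inner (g u) d)) (at u within A)"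
  unfolding has_derivative_within
proof (intro conjI bounded_linear_inner_right)
  have "((\<lambda>y. g y - g u) \<longlongrightarrow> 0) (at u within A)"
    using g u by (simp add: continuous_on_def LIM_zero)
  then have lim: "((\<lambda>y. norm (g y - g u)) \<longlongrightarrow> 0) (at u within A)"
    by (rule tendsto_norm_zero)
  \<comment> \<open>Both divergences between y and u are nonnegative and sum to an inner product of differences.\<close>
  have "norm ((1 / norm (y - u)) *\<^sub>R (h y - (h u + inner (g u) (y - u)))) \<le> norm (g y - g u)"
    if y: "y \<in> A" for y
  proof -
    have "bregman h g y u \<le> inner (y - u) (g y - g u)"
      using bregman_sum_swap[of h g y u] nonneg[OF u y] by linarith
    also have "\<dots> \<le> norm (y - u) * norm (g y - g u)"
      by (rule norm_cauchy_schwarz)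
    finally have "bregman h g y u \<le> norm (y - u) * norm (g y - g u)" .
    moreover have "h y - (h u + inner (g u) (y - u)) = bregman h g y u"
      unfolding bregman_def by (simp add: inner_commute)
    ultimately show ?thesis
      using nonneg[OF y u] by (cases "y = u") (auto simp: divide_le_eq mult.commute)
  qed
  then show "((\<lambda>y. (1 / norm (y - u)) *\<^sub>R (h y - (h u + inner (g u) (y - u)))) \<longlongrightarrow> 0)
      (at u within A)"
    by (intro Lim_null_comparison[OF _ lim]) (auto simp: eventually_at_filter)
qed

lemma in_range_if_orthogonal_kernel:
  fixes f :: "'a::euclidean_space \<Rightarrow> 'b::euclidean_space"
  assumes "linear f" and adj: "\<And>x z. inner (f x) z = inner x (f' z)"
    and orth: "\<And>z. f' z = 0 \<Longrightarrow> inner b z = 0"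
  shows "b \<in> range f"
proof -
  have "f' = adjoint f"
    using adj by (intro adjoint_unique[symmetric]) simp
  then have "f' -` {0} = (range f)\<^sup>\<bottom>"
    using ker_orthogonal_comp_adjoint[OF adjoint_linear[OF \<open>linear f\<close>]]
    by (simp add: adjoint_adjoint[OF \<open>linear f\<close>])
  then have "b \<in> (range f)\<^sup>\<bottom>\<^sup>\<bottom>"
    using orth by (auto simp: orthogonal_comp_def orthogonal_def inner_commute)
  then show ?thesis
    using orthogonal_comp_self[OF linear_subspace_image[OF \<open>linear f\<close> subspace_UNIV]] by simp
qed

lemma linear_right_inverse_in_span:
  fixes f :: "'a::euclidean_space \<Rightarrow> 'b::euclidean_space"
  assumes "linear f" and ker: "\<And>x. f x = 0 \<longleftrightarrow> (\<forall>v\<in>G. inner x v = 0)"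
  obtains f' where "linear f'" "\<And>y. f' y \<in> span G" "\<And>y. y \<in> range f \<Longrightarrow> f (f' y) = y"
proof -
  have "inj_on f (span G)"
  proof (rule linear_inj_on_iff_eq_0[THEN iffD2, OF \<open>linear f\<close> subspace_span], intro ballI impI)
    fix x assume "x \<in> span G" "f x = 0"
    then have "orthogonal x x"
      using ker orthogonal_to_span by (metis orthogonal_def)
    then show "x = 0" by (simp add: orthogonal_def)
  qed
  then obtain f' where f': "linear f'" "range f' \<subseteq> span G" "\<And>x. x \<in> span G \<Longrightarrow> f' (f x) = x"
    using linear_inj_on_left_inverse[OF \<open>linear f\<close>] by metis
  have "f (f' (f x)) = f x" for x
  proof -
    obtain a b where "a \<in> span G" "\<And>v. v \<in> span G \<Longrightarrow> orthogonal b v" "x = a + b"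
      using orthogonal_subspace_decomp_exists by blast
    then have "f x = f a"
      using ker linear_add[OF \<open>linear f\<close>] by (simp add: orthogonal_def span_base)
    then show ?thesis using f'(3) \<open>a \<in> span G\<close> by simp
  qed
  then show ?thesis
    using that[OF f'(1)] f'(2) by blast
qed

lemma span_differences_subset:
  assumes "x \<in> A" "\<And>y. \<phi> y \<in> A"
  shows "span (range (\<lambda>y. \<phi> y - \<phi> y0)) \<subseteq> span ((\<lambda>a. a - x) ` A)"
proof (rule span_minimal[OF _ subspace_span], clarify)
  fix y
  have "(\<phi> y - x) - (\<phi> y0 - x) \<in> span ((\<lambda>a. a - x) ` A)"
    using assms by (intro span_diff span_base) auto
  then show "\<phi> y - \<phi> y0 \<in> span ((\<lambda>a. a - x) ` A)" by simp
qed

locale unique_minimizer_link =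
  fixes \<phi> :: "'y::finite \<Rightarrow> 'h::euclidean_space"
    and S :: "'v::euclidean_space \<Rightarrow> 'y \<Rightarrow> real"
    and t :: "'h \<Rightarrow> 'v"
  assumes S_cont: "\<And>y. continuous_on UNIV (\<lambda>v. S v y)"
    and t_cont: "continuous_on (marginal_polytope \<phi>) t"
    and t_inj: "inj_on t (marginal_polytope \<phi>)"
    and t_min: "\<And>q v. prob_dist q \<Longrightarrow> v \<noteq> t (mean_emb \<phi> q) \<Longrightarrow>
                  exp_loss S (t (mean_emb \<phi> q)) q < exp_loss S v q"
begin

abbreviation M :: "'h set" where "M \<equiv> marginal_polytope \<phi>"

lemma mean_emb_in_M: "prob_dist q \<Longrightarrow> mean_emb \<phi> q \<in> M"
  by (simp add: marginal_polytope_eq_mean_emb_image)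

lemma exp_loss_link_le: "prob_dist q \<Longrightarrow> exp_loss S (t (mean_emb \<phi> q)) q \<le> exp_loss S v q"
  using t_min[of q v] by (cases "v = t (mean_emb \<phi> q)") auto

lemma regret_eq:
  assumes "prob_dist q"
  shows "regret S v q = exp_loss S v q - exp_loss S (t (mean_emb \<phi> q)) q"
proof -
  have "(INF v'. exp_loss S v' q) = exp_loss S (t (mean_emb \<phi> q)) q"
    using exp_loss_link_le[OF assms] by (intro cInf_eq_minimum) auto
  then show ?thesis
    by (simp add: regret_def)
qed

lemma regret_nonneg: "prob_dist q \<Longrightarrow> 0 \<le> regret S v q"
  by (simp add: regret_eq exp_loss_link_le)

lemma regret_pos: "u \<in> M \<Longrightarrow> prob_dist q \<Longrightarrow> mean_emb \<phi> q \<noteq> u \<Longrightarrow> 0 < regret S (t u) q"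
  using t_min[of q "t u"] t_inj mean_emb_in_M by (simp add: regret_eq inj_on_eq_iff)

lemma exp_loss_perturbation_le:
  assumes p: "prob_dist p" and p': "prob_dist p'"
    and dom: "\<And>y. \<bar>r y\<bar> \<le> p y" and r: "balanced \<phi> r"
  shows "\<bar>exp_loss S (t (mean_emb \<phi> p')) r - exp_loss S (t (mean_emb \<phi> p)) r\<bar>
    \<le> exp_loss S (t (mean_emb \<phi> p')) p - exp_loss S (t (mean_emb \<phi> p)) p"
proof -
  \<comment> \<open>Moving p along \<open>\<plusminus>r\<close> keeps it a distribution with the same mean, hence the same minimiser.\<close>
  have "exp_loss S (t (mean_emb \<phi> p)) (\<lambda>y. p y + s * r y)
      \<le> exp_loss S (t (mean_emb \<phi> p')) (\<lambda>y. p y + s * r y)" if "\<bar>s\<bar> \<le> 1" for s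
  proof -
    have "\<bar>s * r y\<bar> \<le> p y" for y
      using dom[of y] that mult_left_le_one_le[of "\<bar>r y\<bar>" "\<bar>s\<bar>"] by (simp add: abs_mult)
    then have "0 \<le> p y + s * r y" for y
      unfolding abs_le_iff by (smt (verit))
    then have "prob_dist (\<lambda>y. p y + s * r y)"
      using p r by (simp add: prob_dist_def balanced_def sum.distrib sum_distrib_left[symmetric])
    moreover have "mean_emb \<phi> (\<lambda>y. p y + s * r y) = mean_emb \<phi> p"
      using r by (simp add: mean_emb_add mean_emb_scale balanced_def)
    ultimately show ?thesis
      using exp_loss_link_le by metis
  qed
  from this[of 1] this[of "-1"] show ?thesis
    by (simp add: exp_loss_add exp_loss_diff exp_loss_scale abs_le_iff)
qed

lemma exp_loss_perturbation_gap:
  assumes "prob_dist p" "prob_dist p'" "\<And>y. \<bar>r y\<bar> \<le> p y" "\<And>y. \<bar>r y\<bar> \<le> p' y" "balanced \<phi> r"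
  shows "2 * \<bar>exp_loss S (t (mean_emb \<phi> p)) r - exp_loss S (t (mean_emb \<phi> p')) r\<bar>
    \<le> exp_loss S (t (mean_emb \<phi> p)) (\<lambda>y. p' y - p y) - exp_loss S (t (mean_emb \<phi> p')) (\<lambda>y. p' y - p y)"
  using exp_loss_perturbation_le[of p p' r] exp_loss_perturbation_le[of p' p r] assms
  by (simp add: exp_loss_diff abs_minus_commute)

lemma exp_loss_balanced_eq_of_dominated:
  assumes q0: "prob_dist q0" and q1: "prob_dist q1"
    and dom0: "\<And>y. \<bar>r y\<bar> \<le> q0 y" and dom1: "\<And>y. \<bar>r y\<bar> \<le> q1 y" and r: "balanced \<phi> r"
  shows "exp_loss S (t (mean_emb \<phi> q0)) r = exp_loss S (t (mean_emb \<phi> q1)) r"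
proof -
  define d where "d y = q1 y - q0 y" for y
  define f where "f q = exp_loss S (t (mean_emb \<phi> q)) r" for q
  define C where "C = exp_loss S (t (mean_emb \<phi> q0)) d - exp_loss S (t (mean_emb \<phi> q1)) d"
  \<comment> \<open>Walk from q0 to q1 in n equal steps; the gap bounds telescope to \<open>C / (2 n)\<close>.\<close>
  have "\<bar>f q0 - f q1\<bar> \<le> (C / 2) / real n" if "0 < n" for n
  proof -
    define p where "p i y = (1 - real i / real n) * q0 y + (real i / real n) * q1 y" for i y
    have p_prob: "prob_dist (p i)" and p_dom: "\<bar>r y\<bar> \<le> p i y" if "i \<le> n" for i y
    proof -
      have a: "0 \<le> real i / real n" "real i / real n \<le> 1"
        using that \<open>0 < n\<close> by auto
      show "prob_dist (p i)"
        unfolding p_def using prob_dist_convex_combination[OF q0 q1 a] .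
      have "(1 - real i / real n) * \<bar>r y\<bar> + (real i / real n) * \<bar>r y\<bar> \<le> p i y"
        unfolding p_def using a dom0[of y] dom1[of y] by (intro add_mono mult_left_mono) auto
      then show "\<bar>r y\<bar> \<le> p i y" by (simp add: algebra_simps)
    qed
    have p_step: "(\<lambda>y. p (Suc i) y - p i y) = (\<lambda>y. (1 / real n) * d y)" for i
      using \<open>0 < n\<close> by (auto simp: p_def d_def field_simps)
    define z where "z i = exp_loss S (t (mean_emb \<phi> (p i))) d / (2 * real n)" for i
    have "\<bar>f (p i) - f (p (Suc i))\<bar> \<le> z i - z (Suc i)" if "i < n" for i
      using exp_loss_perturbation_gap[OF p_prob p_prob p_dom p_dom r, of i "Suc i"] that
      unfolding p_step exp_loss_scale z_def f_def by (simp add: field_simps)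
    then have "\<bar>f (p 0) - f (p n)\<bar> \<le> z 0 - z n"
      by (rule telescoping_abs_le)
    moreover have "p 0 = q0" "p n = q1"
      using \<open>0 < n\<close> by (auto simp: p_def)
    ultimately show ?thesis
      by (simp add: z_def C_def diff_divide_distrib)
  qed
  then have "f q0 - f q1 = 0"
    by (rule eq_0_if_abs_le_const_over_n)
  then show ?thesis by (simp add: f_def)
qed

lemma exp_loss_balanced_eq_of_pos:
  assumes q0: "prob_dist q0" and q1: "prob_dist q1"
    and pos0: "\<And>y. 0 < q0 y" and pos1: "\<And>y. 0 < q1 y" and r: "balanced \<phi> r"
  shows "exp_loss S (t (mean_emb \<phi> q0)) r = exp_loss S (t (mean_emb \<phi> q1)) r"
proof -
  define \<delta> where "\<delta> = Min (range q0 \<union> range q1)"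
  have "0 < \<delta>" "\<And>y. \<delta> \<le> q0 y" "\<And>y. \<delta> \<le> q1 y"
    unfolding \<delta>_def using pos0 pos1 by auto
  define c where "c = \<delta> / (1 + (\<Sum>y\<in>UNIV. \<bar>r y\<bar>))"
  have "0 < 1 + (\<Sum>y\<in>UNIV. \<bar>r y\<bar>)"
    by (simp add: add_pos_nonneg sum_nonneg)
  then have "0 < c" and "\<bar>c * r y\<bar> \<le> \<delta>" for y
    unfolding c_def using \<open>0 < \<delta>\<close> member_le_sum[of y UNIV "\<lambda>y. \<bar>r y\<bar>"]
    by (auto simp: abs_mult pos_divide_le_eq intro!: mult_left_mono)
  moreover have "balanced \<phi> (\<lambda>y. c * r y)"
    using r by (simp add: balanced_def mean_emb_scale sum_distrib_left[symmetric])
  moreover have "\<bar>c * r y\<bar> \<le> q0 y" "\<bar>c * r y\<bar> \<le> q1 y" for y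
    using \<open>\<bar>c * r y\<bar> \<le> \<delta>\<close> \<open>\<delta> \<le> q0 y\<close> \<open>\<delta> \<le> q1 y\<close> by linarith+
  ultimately have "c * exp_loss S (t (mean_emb \<phi> q0)) r = c * exp_loss S (t (mean_emb \<phi> q1)) r"
    using exp_loss_balanced_eq_of_dominated[OF q0 q1, of "\<lambda>y. c * r y"] by (simp add: exp_loss_scale)
  then show ?thesis
    using \<open>0 < c\<close> by simp
qed

lemma continuous_on_loss_link: "continuous_on M (\<lambda>m. S (t m) y)"
  by (rule continuous_on_compose2[OF S_cont t_cont]) auto

lemma continuous_on_exp_loss_link: "continuous_on M (\<lambda>m. exp_loss S (t m) q)"
  unfolding exp_loss_def by (intro continuous_intros continuous_on_loss_link)

lemma exp_loss_balanced_eq: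
  assumes "u \<in> M" "w \<in> M" "balanced \<phi> r"
  shows "exp_loss S (t u) r = exp_loss S (t w) r"
proof -
  define unif :: "'y \<Rightarrow> real" where "unif y = 1 / real CARD('y)" for y
  have unif: "prob_dist unif" "\<And>y. 0 < unif y"
    by (auto simp: unif_def prob_dist_def)
  define f where "f m = exp_loss S (t m) r" for m
  \<comment> \<open>On the open segment towards the uniform mean every point is the mean of a positive distribution; pass to the endpoint by continuity.\<close>
  have "f x = f (mean_emb \<phi> unif)" if "x \<in> M" for x
  proof -
    obtain q where q: "prob_dist q" "x = mean_emb \<phi> q"
      using \<open>x \<in> M\<close> by (auto simp: marginal_polytope_eq_mean_emb_image)
    define \<gamma> where "\<gamma> s = (1 - s) *\<^sub>R x + s *\<^sub>R mean_emb \<phi> unif" for s :: real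
    have \<gamma>_M: "\<gamma> ` {0..1} \<subseteq> M"
      unfolding \<gamma>_def using convexD_alt[OF convex_marginal_polytope \<open>x \<in> M\<close> mean_emb_in_M[OF unif(1)]]
      by auto
    have "continuous_on {0..1} \<gamma>"
      unfolding \<gamma>_def by (intro continuous_intros)
    then have "continuous_on (closure {0<..1}) (f \<circ> \<gamma>)"
      unfolding f_def
      using continuous_on_compose[OF _ continuous_on_subset[OF continuous_on_exp_loss_link \<gamma>_M]]
      by (simp add: o_def)
    moreover have "(f \<circ> \<gamma>) s = f (mean_emb \<phi> unif)" if "s \<in> {0<..1}" for s
    proof -
      define qs where "qs y = (1 - s) * q y + s * unif y" for y
      have "prob_dist qs"
        unfolding qs_def using that by (intro prob_dist_convex_combination q(1) unif(1)) auto
      moreover have "0 < qs y" for y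
        using that q(1) unif(2)[of y] by (simp add: qs_def prob_dist_def add_nonneg_pos)
      moreover have "\<gamma> s = mean_emb \<phi> qs"
        unfolding \<gamma>_def q(2) qs_def by (simp add: mean_emb_convex_combination)
      ultimately show ?thesis
        using exp_loss_balanced_eq_of_pos[OF _ unif(1) _ unif(2) \<open>balanced \<phi> r\<close>] by (simp add: f_def)
    qed
    moreover have "(0::real) \<in> closure {0<..1}"
      by simp
    ultimately have "(f \<circ> \<gamma>) 0 = f (mean_emb \<phi> unif)"
      by (rule continuous_constant_on_closure)
    then show ?thesis by (simp add: \<gamma>_def)
  qed
  then show ?thesis
    using assms by (simp add: f_def)
qed

lemma loss_difference_linear_in_features:
  assumes w: "w \<in> M"
  obtains B where "continuous_on M B"
    and "\<And>u. u \<in> M \<Longrightarrow> B u \<in> span (range (\<lambda>y. \<phi> y - \<phi> y0))"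
    and "\<And>u y. u \<in> M \<Longrightarrow>
      (S (t u) y - S (t w) y) - (S (t u) y0 - S (t w) y0) = inner (B u) (\<phi> y - \<phi> y0)"
proof -
  define T :: "'h \<Rightarrow> real^'y" where "T x = (\<chi> y. inner x (\<phi> y - \<phi> y0))" for x
  define T' :: "real^'y \<Rightarrow> 'h" where "T' z = (\<Sum>y\<in>UNIV. z $ y *\<^sub>R (\<phi> y - \<phi> y0))" for z
  define \<beta> :: "'h \<Rightarrow> real^'y" where
    "\<beta> u = (\<chi> y. (S (t u) y - S (t w) y) - (S (t u) y0 - S (t w) y0))" for u
  have "linear T"
    unfolding T_def by (intro linearI) (auto simp: vec_eq_iff inner_add_left)
  have adj: "inner (T x) z = inner x (T' z)" for x z
    by (simp add: T_def T'_def inner_vec_def inner_sum_right mult.commute)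
  \<comment> \<open>A vector of \<open>\<real>^'y\<close> annihilated by \<open>T'\<close> is, after moving its mass to \<open>y0\<close>, a balanced direction.\<close>
  have \<beta>_range: "\<beta> u \<in> range T" if u: "u \<in> M" for u
  proof (rule in_range_if_orthogonal_kernel[OF \<open>linear T\<close> adj])
    fix z assume "T' z = 0"
    define r where "r y = z $ y - (if y = y0 then sum (($) z) UNIV else 0)" for y
    have "balanced \<phi> r"
      using \<open>T' z = 0\<close> sum_shift_weight_to_base[of "($) z" y0 \<phi>]
      by (simp add: balanced_def r_def mean_emb_def T'_def sum_subtractf)
    then have "exp_loss S (t u) r - exp_loss S (t w) r = 0"
      using exp_loss_balanced_eq[OF u w] by simp
    moreover have "exp_loss S (t u) r - exp_loss S (t w) r = inner (\<beta> u) z"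
    proof -
      define \<Delta> where "\<Delta> y = S (t u) y - S (t w) y" for y
      have "exp_loss S (t u) r - exp_loss S (t w) r = (\<Sum>y\<in>UNIV. r y * \<Delta> y)"
        by (simp add: exp_loss_def \<Delta>_def sum_subtractf right_diff_distrib)
      also have "\<dots> = (\<Sum>y\<in>UNIV. z $ y * (\<Delta> y - \<Delta> y0))"
        using sum_shift_weight_to_base[of "($) z" y0 \<Delta>] by (simp add: r_def)
      also have "\<dots> = inner (\<beta> u) z"
        by (simp add: inner_vec_def \<beta>_def \<Delta>_def mult.commute)
      finally show ?thesis .
    qed
    ultimately show "inner (\<beta> u) z = 0" by simp
  qed
  have "T x = 0 \<longleftrightarrow> (\<forall>v\<in>range (\<lambda>y. \<phi> y - \<phi> y0). inner x v = 0)" for x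
    by (auto simp: T_def vec_eq_iff)
  then obtain R where "linear R" "\<And>b. R b \<in> span (range (\<lambda>y. \<phi> y - \<phi> y0))"
    and R: "\<And>b. b \<in> range T \<Longrightarrow> T (R b) = b"
    using linear_right_inverse_in_span[OF \<open>linear T\<close>] by blast
  show ?thesis
  proof (rule that)
    have "continuous_on M \<beta>"
      unfolding \<beta>_def by (intro continuous_on_vec_lambda continuous_intros continuous_on_loss_link)
    moreover have "continuous_on (\<beta> ` M) R"
      using \<open>linear R\<close> by (intro linear_continuous_on) (simp add: linear_conv_bounded_linear)
    ultimately show "continuous_on M (R \<circ> \<beta>)"
      by (rule continuous_on_compose)
    show "(R \<circ> \<beta>) u \<in> span (range (\<lambda>y. \<phi> y - \<phi> y0))" for u
      by (simp add: \<open>\<And>b. R b \<in> span (range (\<lambda>y. \<phi> y - \<phi> y0))\<close>)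
    fix u y
    assume "u \<in> M"
    then have "T (R (\<beta> u)) $ y = \<beta> u $ y"
      using R \<beta>_range by simp
    then show "(S (t u) y - S (t w) y) - (S (t u) y0 - S (t w) y0) = inner ((R \<circ> \<beta>) u) (\<phi> y - \<phi> y0)"
      by (simp add: T_def \<beta>_def)
  qed
qed

lemma exp_loss_affine_in_mean:
  obtains B c where "continuous_on M B"
    and "\<And>u. u \<in> M \<Longrightarrow> B u \<in> span (range (\<lambda>y. \<phi> y - \<phi> y0))"
    and "\<And>u q. u \<in> M \<Longrightarrow> prob_dist q \<Longrightarrow>
      exp_loss S (t u) q = exp_loss S (t (\<phi> y0)) q + c u + inner (B u) (mean_emb \<phi> q)"
proof -
  define w where "w = \<phi> y0"
  have "w \<in> M"
    by (simp add: w_def marginal_polytope_def hull_inc)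
  then obtain B where B: "continuous_on M B" "\<And>u. u \<in> M \<Longrightarrow> B u \<in> span (range (\<lambda>y. \<phi> y - \<phi> y0))"
    and diff: "\<And>u y. u \<in> M \<Longrightarrow>
      (S (t u) y - S (t w) y) - (S (t u) y0 - S (t w) y0) = inner (B u) (\<phi> y - \<phi> y0)"
    by (rule loss_difference_linear_in_features[of w y0]) blast
  define c where "c u = S (t u) y0 - S (t w) y0 - inner (B u) w" for u
  have "exp_loss S (t u) q = exp_loss S (t w) q + c u + inner (B u) (mean_emb \<phi> q)"
    if u: "u \<in> M" and q: "prob_dist q" for u q
  proof -
    have "S (t u) y - S (t w) y = c u + inner (B u) (\<phi> y)" for y
      using diff[OF u, of y] by (simp add: c_def w_def inner_diff_right)
    moreover have "exp_loss S (t u) q - exp_loss S (t w) q = (\<Sum>y\<in>UNIV. q y * (S (t u) y - S (t w) y))"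
      by (simp add: exp_loss_def sum_subtractf right_diff_distrib)
    ultimately have "exp_loss S (t u) q - exp_loss S (t w) q = (\<Sum>y\<in>UNIV. q y * (c u + inner (B u) (\<phi> y)))"
      by simp
    also have "\<dots> = c u + inner (B u) (mean_emb \<phi> q)"
      using q by (simp add: prob_dist_def mean_emb_def distrib_left sum.distrib
          sum_distrib_right[symmetric] inner_sum_right)
    finally show ?thesis by simp
  qed
  then show ?thesis
    using that[OF B] by (simp add: w_def)
qed

lemma regret_eq_bregman:
  obtains g h where "continuous_on M g"
    and "\<And>u. u \<in> M \<Longrightarrow> g u \<in> span ((\<lambda>x. x - u) ` M)"
    and "\<And>u q. u \<in> M \<Longrightarrow> prob_dist q \<Longrightarrow> regret S (t u) q = bregman h g (mean_emb \<phi> q) u"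
proof -
  \<comment> \<open>Any label serves as the base point of the representation.\<close>
  fix y0 :: 'y
  obtain B c where B: "continuous_on M B" "\<And>u. u \<in> M \<Longrightarrow> B u \<in> span (range (\<lambda>y. \<phi> y - \<phi> y0))"
    and loss: "\<And>u q. u \<in> M \<Longrightarrow> prob_dist q \<Longrightarrow>
      exp_loss S (t u) q = exp_loss S (t (\<phi> y0)) q + c u + inner (B u) (mean_emb \<phi> q)"
    by (rule exp_loss_affine_in_mean[of y0]) blast
  define h where "h m = - (c m + inner (B m) m)" for m
  show ?thesis
  proof (rule that[of "\<lambda>u. - B u" h])
    show "continuous_on M (\<lambda>u. - B u)"
      using B(1) by (rule continuous_on_minus)
    show "- B u \<in> span ((\<lambda>x. x - u) ` M)" if "u \<in> M" for u
      using B(2)[OF that] span_differences_subset[OF that, of \<phi> y0]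
      by (auto intro: span_neg simp: marginal_polytope_def hull_inc)
    show "regret S (t u) q = bregman h (\<lambda>u. - B u) (mean_emb \<phi> q) u"
      if u: "u \<in> M" and q: "prob_dist q" for u q
    proof -
      define m where "m = mean_emb \<phi> q"
      have "regret S (t u) q = (c u + inner (B u) m) - (c m + inner (B m) m)"
        using loss[OF u q] loss[OF mean_emb_in_M[OF q] q] by (simp add: regret_eq[OF q] m_def)
      also have "\<dots> = bregman h (\<lambda>u. - B u) m u"
        by (simp add: bregman_def h_def inner_diff_right inner_commute)
      finally show ?thesis by (simp add: m_def)
    qed
  qed
qed

end

theorem theorem3p1:
  fixes \<phi> :: "'y::finite \<Rightarrow> 'h::euclidean_space"
    and S :: "'v::euclidean_space \<Rightarrow> 'y \<Rightarrow> real"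
    and t :: "'h \<Rightarrow> 'v"
  assumes S_cont: "\<And>y. continuous_on UNIV (\<lambda>v. S v y)"
    and t_cont: "continuous_on (marginal_polytope \<phi>) t"
    and t_inj: "inj_on t (marginal_polytope \<phi>)"
    and t_min: "\<And>q v. prob_dist q \<Longrightarrow> v \<noteq> t (mean_emb \<phi> q) \<Longrightarrow>
                  exp_loss S (t (mean_emb \<phi> q)) q < exp_loss S v q"
  shows "\<exists>(h :: 'h \<Rightarrow> real) (g :: 'h \<Rightarrow> 'h).
           strict_convex_on (marginal_polytope \<phi>) h
         \<and> (\<forall>u\<in>marginal_polytope \<phi>.
               g u \<in> span ((\<lambda>x. x - u) ` marginal_polytope \<phi>)
             \<and> (h has_derivative (\<lambda>d. inner (g u) d)) (at u within marginal_polytope \<phi>))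
         \<and> (\<forall>u\<in>marginal_polytope \<phi>. \<forall>q. prob_dist q \<longrightarrow>
               regret S (t u) q = bregman h g (mean_emb \<phi> q) u)"
proof -
  interpret unique_minimizer_link \<phi> S t
    using assms by unfold_locales
  obtain g h where g_cont: "continuous_on M g"
    and g_span: "\<And>u. u \<in> M \<Longrightarrow> g u \<in> span ((\<lambda>x. x - u) ` M)"
    and regret: "\<And>u q. u \<in> M \<Longrightarrow> prob_dist q \<Longrightarrow> regret S (t u) q = bregman h g (mean_emb \<phi> q) u"
    by (rule regret_eq_bregman) blast
  have nonneg: "0 \<le> bregman h g x u" and pos: "x \<noteq> u \<Longrightarrow> 0 < bregman h g x u"
    if "x \<in> M" "u \<in> M" for x u
  proof -
    obtain q where "prob_dist q" "x = mean_emb \<phi> q"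
      using \<open>x \<in> M\<close> by (auto simp: marginal_polytope_eq_mean_emb_image)
    then show "0 \<le> bregman h g x u" "x \<noteq> u \<Longrightarrow> 0 < bregman h g x u"
      using regret[OF \<open>u \<in> M\<close>, symmetric] regret_nonneg regret_pos[OF \<open>u \<in> M\<close>] by auto
  qed
  have "strict_convex_on M h"
    using convex_marginal_polytope pos by (rule strict_convex_on_if_bregman_pos)
  moreover have "(h has_derivative (\<lambda>d. inner (g u) d)) (at u within M)" if "u \<in> M" for u
    using g_cont that nonneg by (rule has_derivative_if_bregman_nonneg)
  ultimately show ?thesis
    using g_span regret by blast
qed

end
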